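(* Let $\beta<-1$ and $(d_i)_{i\ge1}=d(l_\beta,\beta)$. Let $D\subset S_\beta$ be the set of sequences of $S_\beta$ which are (admissible) concatenations of words of the form $d_1d_2\cdots d_{2n-1}$, $n\ge1$. Let $m$ be an ergodic $\sigma$-invariant measure on $S_\beta$ of maximal entropy. If $m$ has support $D$, then $h_m(S_\beta)\le\log\frac{1+\sqrt5}{2}$.
   Context: Let $\beta<-1$, $l_\beta=\frac{\beta}{1-\beta}$, $r_\beta=l_\beta+1$, $I_\beta=[l_\beta,r_\beta)$ and $T_\beta:I_\beta\to I_\beta$, $T_\beta(x)=\beta x-\lfloor \beta x-l_\beta\rfloor$. For $x\in I_\beta$, $d(x,\beta)=(x_i)_{i\ge1}$ with $x_i=\lfloor \beta T_\beta^{i-1}(x)-l_\beta\rfloor$; digits lie in $\mathcal A=\{0,\dots,\lfloor|\beta|\rfloor\}$. Put $(r_i)_{i\ge1}=\lim_{x\to r_\beta^-}d(x,\beta)$. Alternating order: $(x_i)\prec(y_i)$ iff there is $k\ge1$ with $x_i=y_i$ for $i<k$ and $(-1)^k(x_k-y_k)<0$. $S_\beta$ is the set of $(x_i)_{i\in\mathbb Z}\in\mathcal A^{\mathbb Z}$ with $(d_i)_{i\ge1}\preceq(x_{m+i})_{i\ge1}\preceq(r_i)_{i\ge1}$ for all $m\in\mathbb Z$, with the left shift $\sigma$; $h_m(S_\beta)$ denotes the metric entropy of $\sigma$ with respect to $m$. *)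

theory Defs
  imports "HOL-Probability.Probability"
begin

definition l_beta :: "real \<Rightarrow> real" where
  "l_beta \<beta> = \<beta> / (1 - \<beta>)"

definition r_beta :: "real \<Rightarrow> real" where
  "r_beta \<beta> = l_beta \<beta> + 1"

definition T_beta :: "real \<Rightarrow> real \<Rightarrow> real" where
  "T_beta \<beta> x = \<beta> * x - real_of_int \<lfloor>\<beta> * x - l_beta \<beta>\<rfloor>"

text \<open>Digit sequence d(x,beta) = (x_i)_{i>=1}; only indices i >= 1 are meaningful.\<close>
definition dexp :: "real \<Rightarrow> real \<Rightarrow> nat \<Rightarrow> int" where
  "dexp \<beta> x i = \<lfloor>\<beta> * ((T_beta \<beta> ^^ (i - 1)) x) - l_beta \<beta>\<rfloor>"

definition dseq :: "real \<Rightarrow> nat \<Rightarrow> int" where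
  "dseq \<beta> = dexp \<beta> (l_beta \<beta>)"

text \<open>(r_i) = lim_{x -> r_beta^-} d(x,beta), componentwise (product topology on digit sequences).\<close>
definition rseq :: "real \<Rightarrow> nat \<Rightarrow> int" where
  "rseq \<beta> i = (THE a. eventually (\<lambda>x. dexp \<beta> x i = a) (at_left (r_beta \<beta>)))"

definition alphabet :: "real \<Rightarrow> int set" where
  "alphabet \<beta> = {0 .. \<lfloor>\<bar>\<beta>\<bar>\<rfloor>}"

definition alt_less :: "(nat \<Rightarrow> int) \<Rightarrow> (nat \<Rightarrow> int) \<Rightarrow> bool" where
  "alt_less x y \<longleftrightarrow> (\<exists>k\<ge>1. (\<forall>i. 1 \<le> i \<and> i < k \<longrightarrow> x i = y i) \<and> (-1) ^ k * (x k - y k) < 0)"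

definition alt_le :: "(nat \<Rightarrow> int) \<Rightarrow> (nat \<Rightarrow> int) \<Rightarrow> bool" where
  "alt_le x y \<longleftrightarrow> alt_less x y \<or> (\<forall>i\<ge>1. x i = y i)"

definition S_beta :: "real \<Rightarrow> (int \<Rightarrow> int) set" where
  "S_beta \<beta> = {x. (\<forall>i. x i \<in> alphabet \<beta>) \<and>
     (\<forall>m. alt_le (dseq \<beta>) (\<lambda>i. x (m + int i)) \<and> alt_le (\<lambda>i. x (m + int i)) (rseq \<beta>))}"

definition shift :: "(int \<Rightarrow> int) \<Rightarrow> (int \<Rightarrow> int)" where
  "shift x = (\<lambda>i. x (i + 1))"

definition S_meas :: "real \<Rightarrow> (int \<Rightarrow> int) measure" where
  "S_meas \<beta> = restrict_space (PiM UNIV (\<lambda>_. count_space UNIV)) (S_beta \<beta>)"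

definition shift_inv_prob :: "real \<Rightarrow> (int \<Rightarrow> int) measure \<Rightarrow> bool" where
  "shift_inv_prob \<beta> \<mu> \<longleftrightarrow> prob_space \<mu> \<and> sets \<mu> = sets (S_meas \<beta>) \<and>
     space \<mu> = S_beta \<beta> \<and> shift \<in> measurable \<mu> \<mu> \<and>
     (\<forall>A\<in>sets \<mu>. emeasure \<mu> (shift -` A \<inter> space \<mu>) = emeasure \<mu> A)"

definition ergodic :: "'a measure \<Rightarrow> ('a \<Rightarrow> 'a) \<Rightarrow> bool" where
  "ergodic M T \<longleftrightarrow> (\<forall>A\<in>sets M. T -` A \<inter> space M = A \<longrightarrow> measure M A = 0 \<or> measure M A = 1)"

definition meas_partition :: "'a measure \<Rightarrow> 'a set set \<Rightarrow> bool" where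
  "meas_partition M P \<longleftrightarrow> finite P \<and> P \<subseteq> sets M \<and> \<Union>P = space M \<and>
     (\<forall>A\<in>P. \<forall>B\<in>P. A \<noteq> B \<longrightarrow> A \<inter> B = {})"

definition part_entropy :: "'a measure \<Rightarrow> 'a set set \<Rightarrow> real" where
  "part_entropy M P = - (\<Sum>A\<in>P. measure M A * ln (measure M A))"

definition join_part :: "'a measure \<Rightarrow> ('a \<Rightarrow> 'a) \<Rightarrow> 'a set set \<Rightarrow> nat \<Rightarrow> 'a set set" where
  "join_part M T P n = {A. \<exists>f. (\<forall>i<n. f i \<in> P) \<and> A = space M \<inter> (\<Inter>i<n. (T ^^ i) -` f i)}"

definition entropy_wrt :: "'a measure \<Rightarrow> ('a \<Rightarrow> 'a) \<Rightarrow> 'a set set \<Rightarrow> real" where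
  "entropy_wrt M T P = lim (\<lambda>n. part_entropy M (join_part M T P (Suc n)) / real (Suc n))"

definition ks_entropy :: "'a measure \<Rightarrow> ('a \<Rightarrow> 'a) \<Rightarrow> ereal" where
  "ks_entropy M T = (SUP P\<in>{P. meas_partition M P}. ereal (entropy_wrt M T P))"

definition support :: "('a::topological_space) measure \<Rightarrow> 'a set" where
  "support M = {x \<in> space M. \<forall>U. open U \<longrightarrow> x \<in> U \<longrightarrow> emeasure M (U \<inter> space M) > 0}"

text \<open>Sequences in S_beta that are bi-infinite concatenations of words d_1 ... d_{2n-1}:
  c enumerates the (strictly increasing, hence bi-unbounded) cut points.\<close>
definition D_set :: "real \<Rightarrow> (int \<Rightarrow> int) set" where
  "D_set \<beta> = {x \<in> S_beta \<beta>. \<exists>c :: int \<Rightarrow> int. strict_mono c \<and>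
      (\<forall>k. odd (c (k + 1) - c k)) \<and>
      (\<forall>k j. 0 \<le> j \<and> j < c (k + 1) - c k \<longrightarrow> x (c k + j) = dseq \<beta> (nat j + 1))}"

end

theory Submission
  imports Defs
begin

(* If m is supported on D, almost every point is, from some position on, a concatenation of
   odd prefixes d_1 ... d_(2n-1).  The words of length L read from a cut point (the last block
   possibly truncated) number at most phi^L, where phi is the golden ratio, because their number
   c(L) satisfies c(L) <= 1 + c(L-1) + c(L-3) + ... and phi^L >= 1 + phi^(L-1) + phi^(L-3) + ...
   Allowing a bounded number of positions before the first cut and an exceptional set of small
   measure, the window of length L has entropy at most L ln phi + o(L).
   For a finite partition P the cell of a point is, up to an error of small probability, a
   function of a window around it; so the itinerary of length n through P costs at most the
   entropy of a window of length n + 2K plus n times the entropy of the error, which is small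
   by Fano's inequality.  Hence h_m(P) <= ln phi for every P, and the bound follows without using
   ergodicity or maximality of m. *)

section \<open>Entropy of simple random variables\<close>

lemma gibbs_inequality_log:
  fixes p :: "'b \<Rightarrow> real"
  assumes b: "1 < b" and J: "finite J" and p: "\<And>v. v \<in> J \<Longrightarrow> 0 \<le> p v"
  defines "s \<equiv> (\<Sum>v\<in>J. p v)"
  shows "- (\<Sum>v\<in>J. p v * log b (p v)) \<le> s * log b (card J) - s * log b s"
proof (cases "s = 0")
  case True
  then have "\<forall>v\<in>J. p v = 0" using sum_nonneg_eq_0_iff[OF J] p unfolding s_def by blast
  then show ?thesis using True by simp
next
  case False
  then have s: "s > 0" using sum_nonneg[of J p] p unfolding s_def by force
  then have "J \<noteq> {}" unfolding s_def by auto
  then have card: "real (card J) > 0" using J by (simp add: card_gt_0_iff)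
  define q where "q = s / card J"
  have q: "q > 0" using s card by (simp add: q_def)
  have pointwise: "p v * (log b q - log b (p v)) \<le> (q - p v) / ln b" if "v \<in> J" for v
  proof (cases "p v = 0")
    case False
    then have pv: "p v > 0" using p[OF that] by simp
    have "ln (q / p v) \<le> q / p v - 1" using pv q by (intro ln_le_minus_one) simp
    then have "p v * ln (q / p v) \<le> q - p v" using pv by (simp add: field_simps)
    moreover have "p v * (log b q - log b (p v)) = p v * ln (q / p v) / ln b"
      using pv q by (simp add: log_def ln_div diff_divide_distrib[symmetric])
    ultimately show ?thesis using b by (simp add: divide_right_mono)
  qed (use q b in simp)
  have "(\<Sum>v\<in>J. p v * (log b q - log b (p v))) \<le> (\<Sum>v\<in>J. (q - p v) / ln b)"
    using pointwise by (rule sum_mono)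
  also have "\<dots> = (card J * q - s) / ln b" by (simp add: s_def sum_divide_distrib[symmetric] sum_subtractf)
  also have "\<dots> = 0" using card by (simp add: q_def)
  finally have "s * log b q \<le> (\<Sum>v\<in>J. p v * log b (p v))"
    by (simp add: s_def right_diff_distrib sum_subtractf sum_distrib_right)
  moreover have "log b q = log b s - log b (card J)" using s card by (simp add: q_def log_divide)
  ultimately show ?thesis by (simp add: algebra_simps)
qed

lemma le_sqrt_self:
  fixes s :: real
  assumes "0 \<le> s" "s \<le> 1"
  shows "s \<le> sqrt s"
proof -
  have "sqrt s * sqrt s \<le> sqrt s" using assms by (intro mult_left_le) auto
  then show ?thesis using assms by simp
qed

lemma binary_entropy_le_sqrt:
  fixes s :: real
  assumes s: "0 \<le> s" "s \<le> 1"
  shows "- (s * ln s) - (1 - s) * ln (1 - s) \<le> 3 * sqrt s"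
proof -
  have "- (s * ln s) \<le> 2 * sqrt s"
  proof (cases "s = 0")
    case False
    then have "s > 0" using s by simp
    have "ln (1 / sqrt s) \<le> 1 / sqrt s - 1" using \<open>s > 0\<close> by (intro ln_le_minus_one) simp
    then have "- ln s \<le> 2 / sqrt s" using \<open>s > 0\<close> by (simp add: ln_div ln_sqrt)
    then have "s * (- ln s) \<le> s * (2 / sqrt s)" using \<open>s > 0\<close> by (intro mult_left_mono) auto
    also have "s * (2 / sqrt s) = 2 * sqrt s"
      using \<open>s > 0\<close> by (simp add: field_simps real_div_sqrt)
    finally show ?thesis by simp
  qed simp
  moreover have "- ((1 - s) * ln (1 - s)) \<le> s"
  proof (cases "s = 1")
    case False
    then have "1 - s > 0" using s by simp
    have "ln (1 / (1 - s)) \<le> 1 / (1 - s) - 1" using \<open>1 - s > 0\<close> by (intro ln_le_minus_one) simp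
    then have "- ln (1 - s) \<le> s / (1 - s)" using \<open>1 - s > 0\<close> by (simp add: ln_div field_simps)
    then have "(1 - s) * (- ln (1 - s)) \<le> (1 - s) * (s / (1 - s))" using \<open>1 - s > 0\<close> by (intro mult_left_mono) auto
    then show ?thesis using \<open>1 - s > 0\<close> by simp
  qed simp
  moreover have "s \<le> sqrt s" using le_sqrt_self[OF s] .
  ultimately show ?thesis by linarith
qed

lemma (in prob_space) prob_eq_sum_fibres:
  assumes X: "simple_function M X"
  shows "prob {x \<in> space M. X x \<in> B} = (\<Sum>v\<in>X ` space M \<inter> B. prob (X -` {v} \<inter> space M))"
proof -
  have "{x \<in> space M. X x \<in> B} = (\<Union>v\<in>X ` space M \<inter> B. X -` {v} \<inter> space M)" by auto
  then show ?thesis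
    using simple_functionD[OF X]
    by (simp only:) (intro finite_measure_finite_Union, auto simp: disjoint_family_on_def)
qed

context information_space
begin

lemma entropy_eq_sum:
  assumes X: "simple_function M X"
  shows "\<H>(X) = - (\<Sum>v\<in>X ` space M. prob (X -` {v} \<inter> space M) * log b (prob (X -` {v} \<inter> space M)))"
  by (rule entropy_simple_distributed[OF simple_distributedI[OF X measure_nonneg refl]])

lemma entropy_cong:
  assumes "\<And>x. x \<in> space M \<Longrightarrow> X x = Y x"
  shows "\<H>(X) = \<H>(Y)"
proof -
  have "X ` space M = Y ` space M" using assms by (auto simp: image_def)
  moreover have "distr M S X = distr M S Y" for S using assms by (intro distr_cong) auto
  ultimately show ?thesis by (simp add: entropy_def)
qed

lemma entropy_nonneg:
  assumes X: "simple_function M X"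
  shows "0 \<le> \<H>(X)"
proof -
  have "prob A * log b (prob A) \<le> 0" for A
    using b_gt_1 by (cases "prob A = 0") (auto simp: mult_nonneg_nonpos zero_less_measure_iff)
  then show ?thesis unfolding entropy_eq_sum[OF X] by (simp add: sum_nonpos)
qed

lemma entropy_pair_le:
  assumes X: "simple_function M X" and Y: "simple_function M Y"
  shows "\<H>(\<lambda>x. (X x, Y x)) \<le> \<H>(X) + \<H>(Y)"
  using entropy_chain_rule[OF X Y] conditional_entropy_less_eq_entropy[OF Y X] by simp

lemma entropy_le_split:
  fixes G :: "'b set"
  assumes X: "simple_function M X"
  defines "s \<equiv> prob {x \<in> space M. X x \<notin> G}"
  shows "\<H>(X) \<le> (1 - s) * log b (card (X ` space M \<inter> G)) - (1 - s) * log b (1 - s)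
                 + s * log b (card (X ` space M - G)) - s * log b s"
proof -
  let ?p = "\<lambda>v. prob (X -` {v} \<inter> space M)"
  have fin: "finite (X ` space M)" using simple_functionD(1)[OF X] .
  have split: "X ` space M = (X ` space M \<inter> G) \<union> (X ` space M - G)" by blast
  have bad: "(\<Sum>v\<in>X ` space M - G. ?p v) = s"
    using prob_eq_sum_fibres[OF X, of "- G"] by (simp add: s_def Diff_eq)
  have "(\<Sum>v\<in>X ` space M. ?p v) = 1"
    using prob_eq_sum_fibres[OF X, of UNIV] by (simp add: prob_space)
  then have good: "(\<Sum>v\<in>X ` space M \<inter> G. ?p v) = 1 - s"
    using bad fin by (subst (asm) split, subst (asm) sum.union_disjoint) auto
  have "\<H>(X) = - (\<Sum>v\<in>X ` space M \<inter> G. ?p v * log b (?p v)) - (\<Sum>v\<in>X ` space M - G. ?p v * log b (?p v))"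
    using fin unfolding entropy_eq_sum[OF X] by (subst split, subst sum.union_disjoint) auto
  then show ?thesis
    using gibbs_inequality_log[OF b_gt_1, of "X ` space M \<inter> G" ?p]
      gibbs_inequality_log[OF b_gt_1, of "X ` space M - G" ?p] fin good bad
    by (simp add: measure_nonneg)
qed

end

section \<open>Measure-preserving maps and itineraries\<close>

definition measure_preserving :: "'a measure \<Rightarrow> ('a \<Rightarrow> 'a) \<Rightarrow> bool" where
  "measure_preserving M T \<longleftrightarrow> T \<in> M \<rightarrow>\<^sub>M M \<and>
     (\<forall>A\<in>sets M. emeasure M (T -` A \<inter> space M) = emeasure M A)"

lemma measure_preserving_funpow:
  assumes T: "measure_preserving M T"
  shows "measure_preserving M (T ^^ n)"
proof (induction n)
  case 0 then show ?case by (simp add: measure_preserving_def Int_absorb1 sets.sets_into_space)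
next
  case (Suc n)
  have Tm: "T \<in> M \<rightarrow>\<^sub>M M" using T by (simp add: measure_preserving_def)
  have "emeasure M ((T ^^ Suc n) -` A \<inter> space M) = emeasure M A" if A: "A \<in> sets M" for A
  proof -
    let ?B = "(T ^^ n) -` A \<inter> space M"
    have eq: "(T ^^ Suc n) -` A \<inter> space M = T -` ?B \<inter> space M"
      using measurable_space[OF Tm] by (auto simp: funpow_Suc_right funpow_swap1)
    have "?B \<in> sets M"
      using Suc A unfolding measure_preserving_def by (blast intro: measurable_sets)
    then have "emeasure M ((T ^^ Suc n) -` A \<inter> space M) = emeasure M ?B"
      using T unfolding eq measure_preserving_def by blast
    also have "\<dots> = emeasure M A" using Suc A unfolding measure_preserving_def by blast
    finally show ?thesis .
  qed
  then show ?case using measurable_compose_n[OF Tm, of "Suc n"] unfolding measure_preserving_def by blast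
qed

context information_space
begin

lemma entropy_comp_measure_preserving:
  assumes T: "measure_preserving M T" and X: "simple_function M X"
  shows "\<H>(\<lambda>x. X (T x)) = \<H>(X)"
proof -
  let ?p = "\<lambda>v. prob (X -` {v} \<inter> space M)"
  have Tm: "T \<in> M \<rightarrow>\<^sub>M M" using T by (simp add: measure_preserving_def)
  note XT = simple_function_comp[OF Tm X]
  have fibre: "prob ((\<lambda>x. X (T x)) -` {v} \<inter> space M) = ?p v" for v
  proof -
    have "(\<lambda>x. X (T x)) -` {v} \<inter> space M = T -` (X -` {v} \<inter> space M) \<inter> space M"
      using measurable_space[OF Tm] by auto
    moreover have "emeasure M (T -` (X -` {v} \<inter> space M) \<inter> space M) = emeasure M (X -` {v} \<inter> space M)"
      using T simple_functionD(2)[OF X] unfolding measure_preserving_def by blast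
    ultimately show ?thesis by (simp add: measure_def)
  qed
  have "\<H>(\<lambda>x. X (T x)) = - (\<Sum>v\<in>(\<lambda>x. X (T x)) ` space M. ?p v * log b (?p v))"
    using entropy_eq_sum[OF XT] by (simp add: fibre)
  also have "\<dots> = - (\<Sum>v\<in>X ` space M. ?p v * log b (?p v))"
  proof -
    have "?p v = 0" if "v \<notin> (\<lambda>x. X (T x)) ` space M" for v
    proof -
      have "(\<lambda>x. X (T x)) -` {v} \<inter> space M = {}" using that by auto
      then show ?thesis using fibre[of v] by simp
    qed
    then show ?thesis
      using measurable_space[OF Tm] simple_functionD(1)[OF X]
      by (intro arg_cong[where f=uminus] sum.mono_neutral_left) auto
  qed
  finally show ?thesis using entropy_eq_sum[OF X] by simp
qed

lemma simple_function_error: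
  assumes "simple_function M X" and "simple_function M Y"
  shows "simple_function M (\<lambda>x. if X x = Y x then None else Some (X x))"
  using simple_function_compose[OF simple_function_Pair[OF assms], of "\<lambda>(u, v). if u = v then None else Some u"]
  by (simp add: comp_def)

lemma entropy_error_le:
  assumes X: "simple_function M X" and Y: "simple_function M Y"
  defines "s \<equiv> prob {x \<in> space M. X x \<noteq> Y x}"
  shows "\<H>(\<lambda>x. if X x = Y x then None else Some (X x))
           \<le> s * log b (card (X ` space M)) - s * log b s - (1 - s) * log b (1 - s)"
proof -
  define E where "E = (\<lambda>x. if X x = Y x then None else Some (X x))"
  have E: "simple_function M E" unfolding E_def by (rule simple_function_error[OF X Y])
  have s: "prob {x \<in> space M. E x \<notin> {None}} = s" unfolding s_def E_def
    by (intro arg_cong[where f=prob]) auto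
  have "card (E ` space M \<inter> {None}) \<le> 1"
    using card_mono[of "{None}" "E ` space M \<inter> {None}"] by auto
  then have good: "log b (card (E ` space M \<inter> {None})) = 0"
    by (cases "card (E ` space M \<inter> {None})") (auto simp: log_def)
  have "E ` space M - {None} \<subseteq> Some ` X ` space M" by (auto simp: E_def)
  then have "card (E ` space M - {None}) \<le> card (Some ` X ` space M)"
    using simple_functionD(1)[OF X] by (intro card_mono) auto
  also have "\<dots> \<le> card (X ` space M)" by (rule card_image_le[OF simple_functionD(1)[OF X]])
  finally have "card (E ` space M - {None}) \<le> card (X ` space M)" .
  moreover have "0 \<le> s" by (simp add: s_def)
  moreover have "0 < card (X ` space M)"
    using simple_functionD(1)[OF X] not_empty by (simp add: card_gt_0_iff)
  ultimately have bad: "s * log b (card (E ` space M - {None})) \<le> s * log b (card (X ` space M))"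
    using b_gt_1 by (cases "card (E ` space M - {None}) = 0") (auto simp: log_def intro!: mult_left_mono divide_right_mono)
  have "\<H>(E) \<le> s * log b (card (X ` space M)) - s * log b s - (1 - s) * log b (1 - s)"
    using entropy_le_split[OF E, of "{None}"] good bad unfolding s by simp
  then show ?thesis unfolding E_def .
qed

end

definition itinerary :: "('a \<Rightarrow> 'a) \<Rightarrow> ('a \<Rightarrow> 'b) \<Rightarrow> nat \<Rightarrow> 'a \<Rightarrow> 'b list" where
  "itinerary T X n x = map (\<lambda>i. X ((T ^^ i) x)) [0..<n]"

lemma itinerary_Suc: "itinerary T X (Suc n) x = itinerary T X n x @ [X ((T ^^ n) x)]"
  by (simp add: itinerary_def)

lemma itinerary_add: "itinerary T X (n + k) x = itinerary T X n x @ itinerary T X k ((T ^^ n) x)"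
proof -
  have "(T ^^ i) ((T ^^ n) x) = (T ^^ (i + n)) x" for i by (simp add: funpow_add)
  then show ?thesis by (intro nth_equalityI) (auto simp: itinerary_def nth_append)
qed

lemma simple_function_itinerary:
  assumes T: "T \<in> M \<rightarrow>\<^sub>M M" and X: "simple_function M X"
  shows "simple_function M (itinerary T X n)"
proof (induction n)
  case 0 then show ?case by (simp add: itinerary_def)
next
  case (Suc n)
  have "simple_function M (\<lambda>x. X ((T ^^ n) x))"
    by (rule simple_function_comp[OF measurable_compose_n[OF T] X])
  from simple_function_compose[OF simple_function_Pair[OF Suc this], of "\<lambda>(u, a). u @ [a]"]
  show ?case by (simp add: comp_def itinerary_Suc)
qed

context information_space
begin

lemma entropy_itinerary_subadditive:
  assumes T: "measure_preserving M T" and X: "simple_function M X"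
  shows "\<H>(itinerary T X (n + k)) \<le> \<H>(itinerary T X n) + \<H>(itinerary T X k)"
proof -
  have Tm: "T \<in> M \<rightarrow>\<^sub>M M" using T by (simp add: measure_preserving_def)
  note s = simple_function_itinerary[OF Tm X]
  note sk = simple_function_comp[OF measurable_compose_n[OF Tm] s]
  have "\<H>(itinerary T X (n + k))
      = \<H>((\<lambda>(u, v). u @ v) \<circ> (\<lambda>x. (itinerary T X n x, itinerary T X k ((T ^^ n) x))))"
    by (rule entropy_cong) (simp add: itinerary_add)
  also have "\<dots> \<le> \<H>(\<lambda>x. (itinerary T X n x, itinerary T X k ((T ^^ n) x)))"
    by (intro entropy_data_processing simple_function_Pair s sk)
  also have "\<dots> \<le> \<H>(itinerary T X n) + \<H>(\<lambda>x. itinerary T X k ((T ^^ n) x))"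
    by (rule entropy_pair_le[OF s sk])
  also have "\<H>(\<lambda>x. itinerary T X k ((T ^^ n) x)) = \<H>(itinerary T X k)"
    by (rule entropy_comp_measure_preserving[OF measure_preserving_funpow[OF T] s])
  finally show ?thesis .
qed

text \<open>With \<open>E\<close> the error variable of the guess \<open>Y\<close>, the pair \<open>(itinerary (j + 1), W)\<close>
  is a function of \<open>((itinerary j, W), E \<circ> T^j)\<close>, so each step costs at most \<open>\<H>(E)\<close>.\<close>
lemma entropy_itinerary_le_guess:
  fixes X :: "'a \<Rightarrow> 'b"
  assumes T: "measure_preserving M T" and X: "simple_function M X" and Y: "simple_function M Y"
    and W: "simple_function M W"
    and determined: "\<And>i. i < n \<Longrightarrow> \<exists>g. \<forall>x\<in>space M. Y ((T ^^ i) x) = g (W x)"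
  shows "\<H>(itinerary T X n) \<le> \<H>(W) + n * \<H>(\<lambda>x. if X x = Y x then None else Some (X x))"
proof -
  define E where "E = (\<lambda>x. if X x = Y x then None else Some (X x))"
  have Tm: "T \<in> M \<rightarrow>\<^sub>M M" using T by (simp add: measure_preserving_def)
  have sE: "simple_function M E" unfolding E_def by (rule simple_function_error[OF X Y])
  note sEj = simple_function_comp[OF measurable_compose_n[OF Tm] sE]
  note sI = simple_function_itinerary[OF Tm X]
  have "\<H>(\<lambda>x. (itinerary T X j x, W x)) \<le> \<H>(W) + j * \<H>(E)" if "j \<le> n" for j
    using that
  proof (induction j)
    case 0
    have "\<H>(\<lambda>x. (itinerary T X 0 x, W x)) = \<H>((\<lambda>w. ([] :: 'b list, w)) \<circ> W)"
      by (simp add: itinerary_def comp_def)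
    also have "\<dots> = \<H>(W)" by (rule entropy_of_inj[OF W]) (simp add: inj_on_def)
    finally show ?case by simp
  next
    case (Suc j)
    obtain g where g: "\<And>x. x \<in> space M \<Longrightarrow> Y ((T ^^ j) x) = g (W x)"
      using determined[of j] Suc.prems by auto
    let ?f = "\<lambda>((u, w), e). (u @ [case e of None \<Rightarrow> g w | Some a \<Rightarrow> a], w)"
    have "\<H>(\<lambda>x. (itinerary T X (Suc j) x, W x))
        = \<H>(?f \<circ> (\<lambda>x. ((itinerary T X j x, W x), E ((T ^^ j) x))))"
      by (rule entropy_cong) (simp add: itinerary_Suc E_def g)
    also have "\<dots> \<le> \<H>(\<lambda>x. ((itinerary T X j x, W x), E ((T ^^ j) x)))"
      by (intro entropy_data_processing simple_function_Pair sI W sEj)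
    also have "\<dots> \<le> \<H>(\<lambda>x. (itinerary T X j x, W x)) + \<H>(\<lambda>x. E ((T ^^ j) x))"
      by (intro entropy_pair_le simple_function_Pair sI W sEj)
    also have "\<H>(\<lambda>x. E ((T ^^ j) x)) = \<H>(E)"
      by (rule entropy_comp_measure_preserving[OF measure_preserving_funpow[OF T] sE])
    finally show ?case using Suc by (simp add: algebra_simps)
  qed
  moreover have "\<H>(itinerary T X n) \<le> \<H>(\<lambda>x. (itinerary T X n x, W x))"
    using entropy_data_processing[OF simple_function_Pair[OF sI W], of fst] by (simp add: comp_def)
  ultimately show ?thesis unfolding E_def by fastforce
qed

end

section \<open>Subadditive sequences\<close>

lemma subadditive_le_mult:
  fixes a :: "nat \<Rightarrow> real"
  assumes sub: "\<And>n k. a (n + k) \<le> a n + a k"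
  shows "a (q * N + r) \<le> q * a N + a r"
proof (induction q)
  case (Suc q)
  have "a (Suc q * N + r) \<le> a N + a (q * N + r)" using sub[of N "q * N + r"] by (simp add: add.assoc)
  then show ?case using Suc by (simp add: algebra_simps)
qed simp

lemma subadditive_eventually_le:
  fixes a :: "nat \<Rightarrow> real"
  assumes sub: "\<And>n k. a (n + k) \<le> a n + a k" and nonneg: "\<And>n. 0 \<le> a n"
    and N: "N \<ge> 1" and \<epsilon>: "\<epsilon> > 0"
  shows "\<forall>\<^sub>F n in sequentially. a (Suc n) / Suc n < a N / N + \<epsilon>"
proof -
  define C where "C = (\<Sum>r<N. a r)"
  have C: "a r \<le> C" if "r < N" for r
    unfolding C_def using that by (intro member_le_sum) (auto simp: nonneg)
  have "(\<lambda>n. C / Suc n) \<longlonglongrightarrow> 0"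
    using tendsto_mult[OF tendsto_const[of C] LIMSEQ_inverse_real_of_nat] by (simp add: divide_inverse)
  then have "\<forall>\<^sub>F n in sequentially. C / Suc n < \<epsilon>"
    using \<epsilon> by (intro order_tendstoD(2)) auto
  then show ?thesis
  proof eventually_elim
    case (elim n)
    define q r where "q = Suc n div N" and "r = Suc n mod N"
    have n: "Suc n = q * N + r" and "r < N" using N by (auto simp: q_def r_def)
    then have "a (Suc n) \<le> q * a N + C" using subadditive_le_mult[OF sub, of q N r] C by force
    moreover have "q * a N \<le> Suc n * (a N / N)"
    proof -
      have "q * a N = (q * N) * (a N / N)" using N by simp
      also have "\<dots> \<le> Suc n * (a N / N)"
        using n nonneg[of N] by (intro mult_right_mono) (simp_all del: of_nat_Suc)
      finally show ?thesis .
    qed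
    ultimately have "a (Suc n) / Suc n \<le> a N / N + C / Suc n"
      by (simp add: field_simps del: of_nat_Suc)
    then show ?case using elim by linarith
  qed
qed

lemma subadditive_convergent:
  fixes a :: "nat \<Rightarrow> real"
  assumes sub: "\<And>n k. a (n + k) \<le> a n + a k" and nonneg: "\<And>n. 0 \<le> a n"
  shows "convergent (\<lambda>n. a (Suc n) / Suc n)"
    and "\<And>N. N \<ge> 1 \<Longrightarrow> lim (\<lambda>n. a (Suc n) / Suc n) \<le> a N / N"
proof -
  define L where "L = (INF n\<in>{1..}. a n / n)"
  have bdd: "bdd_below ((\<lambda>n. a n / n) ` {1..})"
    by (rule bdd_belowI[where m=0]) (auto simp: nonneg)
  have L_le: "L \<le> a n / n" if "n \<ge> 1" for n
    unfolding L_def using that bdd by (intro cINF_lower) auto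
  have "(\<lambda>n. a (Suc n) / Suc n) \<longlonglongrightarrow> L"
  proof (rule order_tendstoI)
    show "\<forall>\<^sub>F n in sequentially. y < a (Suc n) / Suc n" if "y < L" for y
      using that L_le[of "Suc _"] by (auto intro: always_eventually less_le_trans)
    show "\<forall>\<^sub>F n in sequentially. a (Suc n) / Suc n < y" if "L < y" for y
    proof -
      have "\<exists>N\<in>{1..}. a N / N < y"
        using that unfolding L_def by (subst cINF_less_iff[OF _ bdd, symmetric]) auto
      then obtain N where "N \<ge> 1" "a N / N < y" by auto
      then show ?thesis
        using subadditive_eventually_le[OF sub nonneg \<open>N \<ge> 1\<close>, of "y - a N / N"] by simp
    qed
  qed
  then show "convergent (\<lambda>n. a (Suc n) / Suc n)" by (auto simp: convergent_def)
  show "lim (\<lambda>n. a (Suc n) / Suc n) \<le> a N / N" if "N \<ge> 1" for N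
    using limI[OF \<open>_ \<longlonglongrightarrow> L\<close>] L_le[OF that] by simp
qed

lemma subadditive_lim_le:
  fixes a :: "nat \<Rightarrow> real" and h :: real
  assumes sub: "\<And>n k. a (n + k) \<le> a n + a k" and nonneg: "\<And>n. 0 \<le> a n"
    and bound: "\<And>\<epsilon>. \<epsilon> > 0 \<Longrightarrow> \<exists>C. \<forall>n\<ge>1. a n \<le> C + real n * (h + \<epsilon>)"
  shows "lim (\<lambda>n. a (Suc n) / Suc n) \<le> h"
proof (rule field_le_epsilon)
  fix \<epsilon> :: real assume "\<epsilon> > 0"
  then obtain C where C: "\<And>n. n \<ge> 1 \<Longrightarrow> a n \<le> C + real n * (h + \<epsilon> / 2)"
    using bound[of "\<epsilon> / 2"] by auto
  define n where "n = nat \<lceil>2 * C / \<epsilon>\<rceil> + 1"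
  have "2 * C / \<epsilon> \<le> n" unfolding n_def using real_nat_ceiling_ge[of "2 * C / \<epsilon>"] by linarith
  then have n: "n \<ge> 1" "C / n \<le> \<epsilon> / 2"
    using \<open>\<epsilon> > 0\<close> by (auto simp: n_def divide_le_eq field_simps)
  have "a n / n \<le> C / n + (h + \<epsilon> / 2)"
    using C[OF n(1)] n(1) by (simp add: field_simps)
  then show "lim (\<lambda>n. a (Suc n) / Suc n) \<le> h + \<epsilon>"
    using subadditive_convergent(2)[OF sub nonneg n(1)] n(2) by linarith
qed

section \<open>Partitions and their joins\<close>

definition cell :: "'a set set \<Rightarrow> 'a \<Rightarrow> 'a set" where
  "cell P x = (THE A. A \<in> P \<and> x \<in> A)"

lemma partition_cell_unique:
  assumes P: "meas_partition M P" and "A \<in> P" "B \<in> P" "x \<in> A" "x \<in> B"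
  shows "A = B"
proof (rule ccontr)
  assume "A \<noteq> B"
  then have "A \<inter> B = {}" using P \<open>A \<in> P\<close> \<open>B \<in> P\<close> unfolding meas_partition_def by blast
  then show False using \<open>x \<in> A\<close> \<open>x \<in> B\<close> by blast
qed

lemma cell_in_partition:
  assumes P: "meas_partition M P" and x: "x \<in> space M"
  shows "cell P x \<in> P" and "x \<in> cell P x"
proof -
  have "x \<in> \<Union>P" using P x by (simp add: meas_partition_def)
  then obtain A where "A \<in> P" "x \<in> A" by blast
  then have "\<exists>!A. A \<in> P \<and> x \<in> A" using partition_cell_unique[OF P] by blast
  then have "cell P x \<in> P \<and> x \<in> cell P x" unfolding cell_def by (rule theI')
  then show "cell P x \<in> P" "x \<in> cell P x" by auto
qed

lemma cell_eq_iff: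
  assumes P: "meas_partition M P" and x: "x \<in> space M" and A: "A \<in> P"
  shows "cell P x = A \<longleftrightarrow> x \<in> A"
  using cell_in_partition[OF P x] partition_cell_unique[OF P _ A] by blast

lemma simple_function_cell:
  assumes P: "meas_partition M P"
  shows "simple_function M (cell P)"
proof -
  have "cell P ` space M \<subseteq> P" using cell_in_partition[OF P] by auto
  then have "finite (cell P ` space M)" using P finite_subset by (auto simp: meas_partition_def)
  moreover have "cell P -` {A} \<inter> space M \<in> sets M" for A
  proof (cases "A \<in> P")
    case True
    then have "A \<subseteq> space M" using P sets.sets_into_space by (auto simp: meas_partition_def)
    then have "cell P -` {A} \<inter> space M = A" using cell_eq_iff[OF P _ True] by auto
    then show ?thesis using True P by (auto simp: meas_partition_def)
  next
    case False
    then have "cell P -` {A} \<inter> space M = {}" using cell_in_partition(1)[OF P] by auto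
    then show ?thesis by simp
  qed
  ultimately show ?thesis by (simp add: simple_function_def)
qed

lemma itinerary_cell_eq_iff:
  assumes P: "meas_partition M P" and T: "T \<in> M \<rightarrow>\<^sub>M M" and y: "y \<in> space M"
    and f: "\<And>i. i < n \<Longrightarrow> f i \<in> P"
  shows "itinerary T (cell P) n y = map f [0..<n] \<longleftrightarrow> (\<forall>i<n. (T ^^ i) y \<in> f i)"
proof -
  have orbit: "(T ^^ i) y \<in> space M" for i using measurable_space[OF measurable_compose_n[OF T] y] .
  have "itinerary T (cell P) n y = map f [0..<n] \<longleftrightarrow> (\<forall>i<n. cell P ((T ^^ i) y) = f i)"
    by (auto simp: itinerary_def list_eq_iff_nth_eq)
  also have "\<dots> \<longleftrightarrow> (\<forall>i<n. (T ^^ i) y \<in> f i)"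
    by (auto simp: cell_eq_iff[OF P orbit f])
  finally show ?thesis .
qed

lemma join_part_eq_fibres:
  fixes n :: nat
  assumes P: "meas_partition M P" and T: "T \<in> M \<rightarrow>\<^sub>M M"
  defines "V \<equiv> itinerary T (cell P) n"
  shows "join_part M T P n - {{}} = (\<lambda>v. V -` {v} \<inter> space M) ` V ` space M"
proof (intro equalityI subsetI)
  fix A assume "A \<in> join_part M T P n - {{}}"
  then obtain f where f: "\<And>i. i < n \<Longrightarrow> f i \<in> P" and A: "A = space M \<inter> (\<Inter>i<n. (T ^^ i) -` f i)"
    and "A \<noteq> {}" unfolding join_part_def by auto
  then obtain x where x: "x \<in> A" by auto
  have iff: "y \<in> A \<longleftrightarrow> y \<in> space M \<and> V y = map f [0..<n]" for y
    using itinerary_cell_eq_iff[OF P T _ f, of y] unfolding A V_def by auto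
  then have "A = V -` {V x} \<inter> space M" "x \<in> space M" using x by auto
  then show "A \<in> (\<lambda>v. V -` {v} \<inter> space M) ` V ` space M" by auto
next
  fix A assume "A \<in> (\<lambda>v. V -` {v} \<inter> space M) ` V ` space M"
  then obtain x where x: "x \<in> space M" and A: "A = V -` {V x} \<inter> space M" by auto
  define f where "f i = cell P ((T ^^ i) x)" for i
  have f: "f i \<in> P" for i
    unfolding f_def by (rule cell_in_partition(1)[OF P measurable_space[OF measurable_compose_n[OF T] x]])
  have "V x = map f [0..<n]" by (simp add: V_def itinerary_def f_def)
  then have "A = space M \<inter> (\<Inter>i<n. (T ^^ i) -` f i)"
    using itinerary_cell_eq_iff[OF P T _ f] unfolding A V_def by auto
  moreover have "A \<noteq> {}" using x A by auto
  ultimately show "A \<in> join_part M T P n - {{}}" unfolding join_part_def by (auto intro!: exI[of _ f] f)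
qed

lemma part_entropy_Diff_empty: "part_entropy M (Q - {{}}) = part_entropy M Q"
proof (cases "finite Q")
  case True
  then show ?thesis unfolding part_entropy_def by (intro arg_cong[where f=uminus] sum.mono_neutral_left) auto
next
  case False
  then have "infinite (Q - {{}})" by simp
  then show ?thesis using False by (simp add: part_entropy_def)
qed

context information_space
begin

lemma part_entropy_fibres:
  assumes V: "simple_function M V"
  shows "part_entropy M ((\<lambda>v. V -` {v} \<inter> space M) ` V ` space M) = ln b * \<H>(V)"
proof -
  have "inj_on (\<lambda>v. V -` {v} \<inter> space M) (V ` space M)" by (rule inj_onI) blast
  then show ?thesis
    using b_gt_1
    by (simp add: part_entropy_def entropy_eq_sum[OF V] sum.reindex log_def sum_divide_distrib[symmetric])
qed

lemma part_entropy_join_part: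
  assumes P: "meas_partition M P" and T: "T \<in> M \<rightarrow>\<^sub>M M"
  shows "part_entropy M (join_part M T P n) = ln b * \<H>(itinerary T (cell P) n)"
  using part_entropy_fibres[OF simple_function_itinerary[OF T simple_function_cell[OF P]]]
  by (simp add: join_part_eq_fibres[OF P T, symmetric] part_entropy_Diff_empty)

end

section \<open>Windows and words parsed into odd prefixes\<close>

definition window :: "int \<Rightarrow> nat \<Rightarrow> (int \<Rightarrow> 'a) \<Rightarrow> 'a list" where
  "window a L x = map (\<lambda>t. x (a + int t)) [0..<L]"

lemma length_window [simp]: "length (window a L x) = L"
  by (simp add: window_def)

lemma nth_window [simp]: "t < L \<Longrightarrow> window a L x ! t = x (a + int t)"
  by (simp add: window_def)

lemma window_add: "window a (j + L) x = window a j x @ window (a + int j) L x"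
  by (rule nth_equalityI) (auto simp: nth_append algebra_simps)

lemma take_drop_window:
  "i + l \<le> L \<Longrightarrow> take l (drop i (window a L x)) = window (a + int i) l x"
  by (intro nth_equalityI) (auto simp: algebra_simps)

lemma funpow_shift: "(shift ^^ i) x = (\<lambda>j. x (j + int i))"
  by (induction i) (simp_all add: shift_def algebra_simps)

lemma window_funpow_shift: "window a L ((shift ^^ i) x) = window (a + int i) L x"
  by (rule nth_equalityI) (auto simp: funpow_shift algebra_simps)

definition prefix_word :: "(nat \<Rightarrow> int) \<Rightarrow> nat \<Rightarrow> int list" where
  "prefix_word d j = map (\<lambda>t. d (t + 1)) [0..<j]"

lemma length_prefix_word [simp]: "length (prefix_word d j) = j"
  by (simp add: prefix_word_def)

text \<open>The words of length \<open>m\<close> read in a concatenation of blocks \<open>d\<^sub>1 \<dots> d\<^sub>2\<^sub>n\<^sub>-\<^sub>1\<close>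
  starting at a cut point: odd prefixes of \<open>d\<close>, the last one possibly truncated.\<close>
function prefix_concatenations :: "(nat \<Rightarrow> int) \<Rightarrow> nat \<Rightarrow> int list set" where
  "prefix_concatenations d m = (if m = 0 then {[]} else insert (prefix_word d m)
      (\<Union>t<m div 2. (\<lambda>v. prefix_word d (2 * t + 1) @ v) ` prefix_concatenations d (m - (2 * t + 1))))"
  by pat_completeness auto
termination by (relation "inv_image less_than snd") auto

declare prefix_concatenations.simps [simp del]

lemma finite_prefix_concatenations: "finite (prefix_concatenations d m)"
  by (induction m rule: less_induct) (subst prefix_concatenations.simps, auto)

definition golden_ratio :: real where
  "golden_ratio = (1 + sqrt 5) / 2"

lemma golden_ratio_ge_1: "1 \<le> golden_ratio"
  unfolding golden_ratio_def using real_sqrt_ge_one[of 5] by simp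

lemma golden_ratio_square: "golden_ratio ^ 2 = golden_ratio + 1"
  unfolding golden_ratio_def by (simp add: power2_eq_square field_simps)

lemma golden_ratio_power_ge:
  "1 + (\<Sum>t<m div 2. golden_ratio ^ (m - (2 * t + 1))) \<le> golden_ratio ^ m"
proof (induction m rule: less_induct)
  case (less m)
  consider "m = 0" | "m = 1" | k where "m = Suc (Suc k)" by (metis One_nat_def not0_implies_Suc)
  then show ?case
  proof cases
    case 3
    have d: "Suc (Suc k) div 2 = Suc (k div 2)" by simp
    have "(\<Sum>t<m div 2. golden_ratio ^ (m - (2 * t + 1)))
        = golden_ratio ^ Suc k + (\<Sum>t<k div 2. golden_ratio ^ (k - (2 * t + 1)))"
      unfolding 3 d sum.lessThan_Suc_shift by simp
    moreover have "golden_ratio ^ m = golden_ratio ^ k * golden_ratio ^ 2"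
      unfolding 3 by (simp add: power_add[symmetric])
    then have "golden_ratio ^ m = golden_ratio ^ Suc k + golden_ratio ^ k"
      by (simp add: golden_ratio_square algebra_simps)
    ultimately show ?thesis using less[of k] 3 by simp
  qed (use golden_ratio_ge_1 in simp_all)
qed

lemma card_prefix_concatenations_le: "card (prefix_concatenations d m) \<le> golden_ratio ^ m"
proof (induction m rule: less_induct)
  case (less m)
  show ?case
  proof (cases "m = 0")
    case False
    let ?C = "\<lambda>t. prefix_concatenations d (m - (2 * t + 1))"
    have "card (prefix_concatenations d m) \<le> Suc (card (\<Union>t<m div 2. (\<lambda>v. prefix_word d (2 * t + 1) @ v) ` ?C t))"
      using False by (subst prefix_concatenations.simps) (simp add: card_insert_le_m1)
    also have "\<dots> \<le> Suc (\<Sum>t<m div 2. card ((\<lambda>v. prefix_word d (2 * t + 1) @ v) ` ?C t))"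
      by (intro Suc_le_mono[THEN iffD2] card_UN_le) simp
    also have "\<dots> \<le> Suc (\<Sum>t<m div 2. card (?C t))"
      by (simp add: card_image_le finite_prefix_concatenations sum_mono)
    finally have "card (prefix_concatenations d m) \<le> 1 + (\<Sum>t<m div 2. real (card (?C t)))"
      by (simp add: of_nat_le_iff[symmetric, where 'a=real] del: of_nat_le_iff)
    also have "\<dots> \<le> 1 + (\<Sum>t<m div 2. golden_ratio ^ (m - (2 * t + 1)))"
      using less False by (intro add_left_mono sum_mono) auto
    also have "\<dots> \<le> golden_ratio ^ m" by (rule golden_ratio_power_ge)
    finally show ?thesis .
  qed (simp add: prefix_concatenations.simps)
qed

definition tail_parsed_words :: "(nat \<Rightarrow> int) \<Rightarrow> int set \<Rightarrow> nat \<Rightarrow> nat \<Rightarrow> int list set" where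
  "tail_parsed_words d A L e =
     {w. length w = L \<and> set w \<subseteq> A \<and> (\<exists>i<e. drop i w \<in> prefix_concatenations d (L - i))}"

lemma card_tail_parsed_words_le:
  assumes A: "finite A" "A \<noteq> {}"
  shows "card (tail_parsed_words d A L e) \<le> real e * real (card A) ^ e * golden_ratio ^ L"
proof -
  define F where "F i = (\<lambda>(u, v). u @ v) `
    ({u. set u \<subseteq> A \<and> length u = min i L} \<times> prefix_concatenations d (L - i))" for i
  have finite: "finite ({u. set u \<subseteq> A \<and> length u = min i L} \<times> prefix_concatenations d (L - i))" for i
    using A by (intro finite_cartesian_product finite_lists_length_eq finite_prefix_concatenations)
  have "tail_parsed_words d A L e \<subseteq> (\<Union>i<e. F i)"
  proof
    fix w assume "w \<in> tail_parsed_words d A L e"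
    then obtain i where i: "i < e" "drop i w \<in> prefix_concatenations d (L - i)"
      and w: "length w = L" "set w \<subseteq> A"
      by (auto simp: tail_parsed_words_def)
    have "take i w \<in> {u. set u \<subseteq> A \<and> length u = min i L}" using w set_take_subset[of i w] by auto
    then have "w \<in> F i" unfolding F_def using i by (intro image_eqI[where x="(take i w, drop i w)"]) auto
    then show "w \<in> (\<Union>i<e. F i)" using i by auto
  qed
  then have "card (tail_parsed_words d A L e) \<le> card (\<Union>i<e. F i)"
    using finite by (intro card_mono) (auto simp: F_def)
  also have "\<dots> \<le> (\<Sum>i<e. card (F i))" by (rule card_UN_le) simp
  finally have "real (card (tail_parsed_words d A L e)) \<le> (\<Sum>i<e. real (card (F i)))"
    by (simp add: of_nat_le_iff[symmetric, where 'a=real] del: of_nat_le_iff)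
  also have "\<dots> \<le> (\<Sum>i<e. real (card A) ^ e * golden_ratio ^ L)"
  proof (rule sum_mono)
    fix i assume "i \<in> {..<e}"
    have "card (F i) \<le> card A ^ min i L * card (prefix_concatenations d (L - i))"
      unfolding F_def using card_image_le[OF finite] A by (simp add: card_cartesian_product card_lists_length_eq)
    then have "real (card (F i)) \<le> real (card A) ^ min i L * real (card (prefix_concatenations d (L - i)))"
      by (simp add: of_nat_le_iff[symmetric, where 'a=real] del: of_nat_le_iff)
    also have "\<dots> \<le> real (card A) ^ e * golden_ratio ^ L"
    proof (rule mult_mono)
      show "real (card A) ^ min i L \<le> real (card A) ^ e"
        using A \<open>i \<in> {..<e}\<close> by (intro power_increasing) (auto simp: Suc_le_eq card_gt_0_iff)
      show "real (card (prefix_concatenations d (L - i))) \<le> golden_ratio ^ L"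
        using card_prefix_concatenations_le[of d "L - i"] power_increasing[of "L - i" L golden_ratio]
          golden_ratio_ge_1 by linarith
    qed simp_all
    finally show "real (card (F i)) \<le> real (card A) ^ e * golden_ratio ^ L" .
  qed
  finally show ?thesis by simp
qed

lemma window_at_cut_in_prefix_concatenations:
  fixes c x :: "int \<Rightarrow> int"
  assumes c: "strict_mono c" and odd: "\<And>k. odd (c (k + 1) - c k)"
    and x: "\<And>k j. 0 \<le> j \<Longrightarrow> j < c (k + 1) - c k \<Longrightarrow> x (c k + j) = d (nat j + 1)"
  shows "window (c k) L x \<in> prefix_concatenations d L"
proof (induction L arbitrary: k rule: less_induct)
  case (less L)
  define j where "j = nat (c (k + 1) - c k)"
  have "c k < c (k + 1)" using c by (simp add: strict_mono_def)
  then have j: "int j = c (k + 1) - c k" "odd j" using odd[of k] by (auto simp: j_def even_nat_iff)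
  have block: "window (c k) l x = prefix_word d l" if "l \<le> j" for l
    using x[of _ k] that j by (intro nth_equalityI) (auto simp: prefix_word_def)
  show ?case
  proof (cases "L = 0 \<or> L \<le> j")
    case True
    then show ?thesis using block by (subst prefix_concatenations.simps) (auto simp: prefix_word_def)
  next
    case False
    define t where "t = j div 2"
    have "j < L" using False by simp
    then have t: "j = 2 * t + 1" "t < L div 2" using j(2) unfolding t_def by presburger+
    have "window (c k) L x = window (c k) j x @ window (c (k + 1)) (L - j) x"
      using window_add[of "c k" j "L - j" x] False j(1) by simp
    moreover have "window (c (k + 1)) (L - j) x \<in> prefix_concatenations d (L - j)"
      using less False t(1) by simp
    ultimately show ?thesis
      using block[of j] t False by (subst prefix_concatenations.simps) auto
  qed
qed

lemma strict_mono_int_nonneg_value: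
  fixes c :: "int \<Rightarrow> int"
  assumes c: "strict_mono c"
  obtains k where "0 \<le> c k"
proof -
  have "c 0 + int n \<le> c (int n)" for n
  proof (induction n)
    case (Suc n)
    have "c (int n) < c (1 + int n)" using c by (simp add: strict_mono_def)
    then show ?case using Suc by simp
  qed simp
  from this[of "nat \<bar>c 0\<bar>"] have "0 \<le> c \<bar>c 0\<bar>" by simp
  then show ?thesis by (rule that)
qed

lemma D_set_parsed:
  assumes "x \<in> D_set \<beta>"
  shows "\<exists>i::nat. \<forall>L. window (int i) L x \<in> prefix_concatenations (dseq \<beta>) L"
proof -
  obtain c :: "int \<Rightarrow> int" where c: "strict_mono c" and odd: "\<And>k. odd (c (k + 1) - c k)"
    and x: "\<And>k j. 0 \<le> j \<Longrightarrow> j < c (k + 1) - c k \<Longrightarrow> x (c k + j) = dseq \<beta> (nat j + 1)"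
    using assms unfolding D_set_def by blast
  obtain k where "0 \<le> c k" using strict_mono_int_nonneg_value[OF c] .
  moreover note window_at_cut_in_prefix_concatenations[where c=c and x=x and d="dseq \<beta>", OF c odd x]
  ultimately show ?thesis by (intro exI[of _ "nat (c k)"]) simp
qed

section \<open>Shift-invariant measures supported on \<open>D\<close>\<close>

lemma log_exp_1 [simp]: "log (exp 1) x = ln x"
  by (simp add: log_def)

lemma finite_alphabet: "finite (alphabet \<beta>)"
  by (simp add: alphabet_def)

lemma alphabet_nonempty: "alphabet \<beta> \<noteq> {}"
  by (simp add: alphabet_def)

lemma open_contains_window_cylinder:
  fixes U :: "(int \<Rightarrow> 'a::topological_space) set"
  assumes U: "open U" and x: "x \<in> U"
  shows "\<exists>k. {z. window (- int k) (2 * k + 1) z = window (- int k) (2 * k + 1) x} \<subseteq> U"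
proof -
  have "openin (product_topology (\<lambda>i. euclidean) UNIV) U" using U by (simp add: open_fun_def)
  from product_topology_open_contains_basis[OF this x] obtain X where
    X: "x \<in> Pi\<^sub>E UNIV X" "finite {i. X i \<noteq> topspace euclidean}" "Pi\<^sub>E UNIV X \<subseteq> U"
    by blast
  define F where "F = {i. X i \<noteq> UNIV}"
  have F: "finite F" using X(2) by (simp add: F_def)
  define k where "k = Max (insert 0 ((\<lambda>i. nat \<bar>i\<bar>) ` F))"
  have k: "\<bar>i\<bar> \<le> int k" if "i \<in> F" for i
  proof -
    have "nat \<bar>i\<bar> \<le> k" unfolding k_def using F that by (intro Max_ge) auto
    then show ?thesis by linarith
  qed
  have "z \<in> Pi\<^sub>E UNIV X" if z: "window (- int k) (2 * k + 1) z = window (- int k) (2 * k + 1) x" for z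
  proof -
    have "z i \<in> X i" for i
    proof (cases "i \<in> F")
      case True
      define t where "t = nat (i + int k)"
      have t: "t < 2 * k + 1" "- int k + int t = i" using k[OF True] by (auto simp: t_def)
      then have "z i = x i" using arg_cong[OF z, of "\<lambda>w. w ! t"] by simp
      then show ?thesis using X(1) by (auto simp: PiE_UNIV_domain)
    qed (simp add: F_def)
    then show ?thesis by (simp add: PiE_UNIV_domain)
  qed
  then show ?thesis using X(3) by blast
qed

lemma (in prob_space) prob_le_Un:
  assumes "X \<subseteq> Y \<union> Z" "Y \<in> sets M" "Z \<in> sets M"
  shows "prob X \<le> prob Y + prob Z"
  using order_trans[OF finite_measure_mono[OF assms(1)] measure_Un_le[OF assms(2,3)]] assms by simp

locale shift_invariant_measure =
  fixes \<beta> :: real and m :: "(int \<Rightarrow> int) measure"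
  assumes shift_inv_prob: "shift_inv_prob \<beta> m"
begin

sublocale information_space m "exp 1"
  using shift_inv_prob
  by (intro information_space.intro information_space_axioms.intro) (auto simp: shift_inv_prob_def)

text \<open>The syntax of \<open>\<H>\<close> does not survive instantiating the base \<open>b\<close>.\<close>
notation entropy_Pow (\<open>\<H>'(_')\<close>)

lemma space_eq: "space m = S_beta \<beta>"
  using shift_inv_prob by (simp add: shift_inv_prob_def)

lemma sets_eq: "sets m = sets (restrict_space (PiM UNIV (\<lambda>_. count_space UNIV)) (space m))"
  using shift_inv_prob by (simp add: shift_inv_prob_def S_meas_def space_eq)

lemma measure_preserving_shift: "measure_preserving m shift"
  using shift_inv_prob unfolding shift_inv_prob_def measure_preserving_def by blast

lemma shift_measurable: "shift \<in> m \<rightarrow>\<^sub>M m"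
  using measure_preserving_shift by (simp add: measure_preserving_def)

lemma coordinate_in_alphabet: "x \<in> space m \<Longrightarrow> x i \<in> alphabet \<beta>"
  by (simp add: space_eq S_beta_def)

lemma set_window_subset: "x \<in> space m \<Longrightarrow> set (window a L x) \<subseteq> alphabet \<beta>"
  using coordinate_in_alphabet by (auto simp: window_def)

lemma simple_function_coordinate: "simple_function m (\<lambda>x. x i)"
proof -
  have "(\<lambda>x. x i) \<in> PiM UNIV (\<lambda>_. count_space UNIV) \<rightarrow>\<^sub>M count_space UNIV"
    by (rule measurable_component_singleton) simp
  then have "(\<lambda>x. x i) \<in> restrict_space (PiM UNIV (\<lambda>_. count_space UNIV)) (space m) \<rightarrow>\<^sub>M count_space UNIV"
    by (rule measurable_restrict_space1)
  then have "(\<lambda>x. x i) \<in> m \<rightarrow>\<^sub>M count_space UNIV"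
    unfolding measurable_cong_sets[OF sets_eq refl] .
  moreover have "(\<lambda>x. x i) ` space m \<subseteq> alphabet \<beta>" using coordinate_in_alphabet by auto
  then have "finite ((\<lambda>x. x i) ` space m)" by (rule finite_subset[OF _ finite_alphabet])
  ultimately show ?thesis by (simp add: simple_function_eq_measurable)
qed

lemma simple_function_window: "simple_function m (window a L)"
proof (induction L)
  case 0 then show ?case by (simp add: window_def)
next
  case (Suc L)
  from simple_function_compose[OF simple_function_Pair[OF Suc simple_function_coordinate[of "a + int L"]],
      of "\<lambda>(u, c). u @ [c]"]
  show ?case by (simp add: comp_def window_def)
qed

lemma window_preimage_sets: "{x \<in> space m. window a L x \<in> E} \<in> sets m"
proof -
  have "{x \<in> space m. window a L x \<in> E} = window a L -` E \<inter> space m" by auto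
  then show ?thesis using simple_functionD(2)[OF simple_function_window] by simp
qed

definition cylinder :: "nat \<Rightarrow> int list set \<Rightarrow> (int \<Rightarrow> int) set" where
  "cylinder k E = {x \<in> space m. window (- int k) (2 * k + 1) x \<in> E}"

lemma cylinder_sets: "cylinder k E \<in> sets m"
  unfolding cylinder_def by (rule window_preimage_sets)

lemma cylinder_lift:
  assumes "k \<le> K"
  shows "cylinder K {w. take (2 * k + 1) (drop (K - k) w) \<in> E} = cylinder k E"
proof -
  have "take (2 * k + 1) (drop (K - k) (window (- int K) (2 * K + 1) x)) = window (- int k) (2 * k + 1) x"
    for x :: "int \<Rightarrow> int"
    using take_drop_window[of "K - k" "2 * k + 1" "2 * K + 1" "- int K" x] assms by (simp add: of_nat_diff)
  then show ?thesis by (simp add: cylinder_def)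
qed

lemma open_Int_space_sets:
  assumes U: "open U"
  shows "U \<inter> space m \<in> sets m"
proof -
  let ?C = "\<lambda>(k, w). if {z. window (- int k) (2 * k + 1) z = w} \<subseteq> U then cylinder k {w} else {}"
  have "U \<inter> space m = (\<Union>i. ?C i)"
  proof (intro equalityI subsetI)
    fix x assume x: "x \<in> U \<inter> space m"
    then obtain k where "{z. window (- int k) (2 * k + 1) z = window (- int k) (2 * k + 1) x} \<subseteq> U"
      using open_contains_window_cylinder[OF U] by blast
    then have "x \<in> ?C (k, window (- int k) (2 * k + 1) x)" using x by (simp add: cylinder_def)
    then show "x \<in> (\<Union>i. ?C i)" by blast
  next
    fix x assume "x \<in> (\<Union>i. ?C i)"
    then obtain k w where "x \<in> ?C (k, w)" by auto
    then show "x \<in> U \<inter> space m" by (auto simp: cylinder_def split: if_splits)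
  qed
  moreover have "?C i \<in> sets m" for i by (cases i) (simp add: cylinder_sets)
  then have "(\<Union>i. ?C i) \<in> sets m" by (intro sets.countable_UN) auto
  ultimately show ?thesis by simp
qed

lemma emeasure_outside_support:
  assumes B: "B \<in> sets m" "B \<inter> support m = {}"
  shows "emeasure m B = 0"
proof -
  let ?C = "\<lambda>(k, w). if emeasure m (cylinder k {w}) = 0 then cylinder k {w} else {}"
  have cover: "B \<subseteq> (\<Union>i. ?C i)"
  proof
    fix x assume x: "x \<in> B"
    then have "x \<in> space m" using sets.sets_into_space[OF B(1)] by auto
    moreover have "x \<notin> support m" using x B(2) by auto
    ultimately have "\<not> (\<forall>U. open U \<longrightarrow> x \<in> U \<longrightarrow> emeasure m (U \<inter> space m) > 0)"
      unfolding support_def by blast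
    then obtain U where U: "open U" "x \<in> U" "emeasure m (U \<inter> space m) = 0"
      by (auto simp: not_less)
    obtain k where "{z. window (- int k) (2 * k + 1) z = window (- int k) (2 * k + 1) x} \<subseteq> U"
      using open_contains_window_cylinder[OF U(1,2)] by blast
    then have "cylinder k {window (- int k) (2 * k + 1) x} \<subseteq> U \<inter> space m"
      by (auto simp: cylinder_def)
    then have "emeasure m (cylinder k {window (- int k) (2 * k + 1) x}) \<le> emeasure m (U \<inter> space m)"
      by (intro emeasure_mono open_Int_space_sets U(1))
    then have "emeasure m (cylinder k {window (- int k) (2 * k + 1) x}) = 0" using U(3) by simp
    then have "x \<in> ?C (k, window (- int k) (2 * k + 1) x)" using \<open>x \<in> space m\<close> by (simp add: cylinder_def)
    then show "x \<in> (\<Union>i. ?C i)" by blast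
  qed
  have "?C i \<in> null_sets m" for i by (cases i) (simp add: cylinder_sets null_sets_def)
  then have "(\<Union>i. ?C i) \<in> null_sets m" by (rule null_sets_UN)
  from null_sets_subset[OF this B(1) cover] show ?thesis by auto
qed

lemma cylinder_Un: "cylinder k (E \<union> E') = cylinder k E \<union> cylinder k E'"
  by (auto simp: cylinder_def)

lemma cylinder_Compl: "cylinder k (- E) = space m - cylinder k E"
  by (auto simp: cylinder_def)

definition cylinder_approximable :: "(int \<Rightarrow> int) set \<Rightarrow> bool" where
  "cylinder_approximable A \<longleftrightarrow> (\<forall>\<eta>>0. \<exists>k E. prob (sym_diff A (cylinder k E)) < \<eta>)"

lemma cylinder_approximable_cylinder: "cylinder_approximable (cylinder k E)"
  unfolding cylinder_approximable_def by (intro allI impI exI[of _ k] exI[of _ E]) simp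

lemma cylinder_approximable_Diff:
  assumes "A \<in> sets m" "cylinder_approximable A"
  shows "cylinder_approximable (space m - A)"
proof -
  have eq: "sym_diff (space m - A) (cylinder k (- E)) = sym_diff A (cylinder k E)" for k E
    using sets.sets_into_space[OF assms(1)] sets.sets_into_space[OF cylinder_sets[of k E]]
    by (auto simp: cylinder_Compl)
  show ?thesis
    unfolding cylinder_approximable_def
  proof (intro allI impI)
    fix \<eta> :: real assume "\<eta> > 0"
    then obtain k E where "prob (sym_diff A (cylinder k E)) < \<eta>"
      using assms(2) unfolding cylinder_approximable_def by blast
    then show "\<exists>k E. prob (sym_diff (space m - A) (cylinder k E)) < \<eta>" unfolding eq[symmetric] by blast
  qed
qed

lemma cylinder_approximable_Un:
  assumes A: "A \<in> sets m" "cylinder_approximable A" and B: "B \<in> sets m" "cylinder_approximable B"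
  shows "cylinder_approximable (A \<union> B)"
  unfolding cylinder_approximable_def
proof (intro allI impI)
  fix \<eta> :: real assume "\<eta> > 0"
  then have "\<eta> / 2 > 0" by simp
  then obtain k E k' E' where
    kE: "prob (sym_diff A (cylinder k E)) < \<eta> / 2" and kE': "prob (sym_diff B (cylinder k' E')) < \<eta> / 2"
    using A(2) B(2) unfolding cylinder_approximable_def by blast
  define K where "K = max k k'"
  let ?E = "{w. take (2 * k + 1) (drop (K - k) w) \<in> E} \<union> {w. take (2 * k' + 1) (drop (K - k') w) \<in> E'}"
  have "k \<le> K" "k' \<le> K" by (simp_all add: K_def)
  then have "cylinder K ?E = cylinder k E \<union> cylinder k' E'"
    unfolding cylinder_Un by (simp only: cylinder_lift)
  then have "sym_diff (A \<union> B) (cylinder K ?E) \<subseteq> sym_diff A (cylinder k E) \<union> sym_diff B (cylinder k' E')"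
    by auto
  then have "prob (sym_diff (A \<union> B) (cylinder K ?E)) \<le> prob (sym_diff A (cylinder k E)) + prob (sym_diff B (cylinder k' E'))"
    using A(1) B(1) cylinder_sets by (intro prob_le_Un) auto
  then have "prob (sym_diff (A \<union> B) (cylinder K ?E)) < \<eta>" using kE kE' by linarith
  then show "\<exists>k E. prob (sym_diff (A \<union> B) (cylinder k E)) < \<eta>" by blast
qed

lemma cylinder_approximable_UN:
  fixes A :: "nat \<Rightarrow> (int \<Rightarrow> int) set"
  assumes A: "\<And>n. A n \<in> sets m" "\<And>n. cylinder_approximable (A n)"
  shows "cylinder_approximable (\<Union>n. A n)"
  unfolding cylinder_approximable_def
proof (intro allI impI)
  fix \<eta> :: real assume "\<eta> > 0"
  have finite_UN: "(\<Union>n<N. A n) \<in> sets m \<and> cylinder_approximable (\<Union>n<N. A n)" for N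
  proof (induction N)
    case 0
    then show ?case using cylinder_approximable_cylinder[of 0 "{}"] by (simp add: cylinder_def)
  next
    case (Suc N)
    then show ?case using A[of N] by (simp add: lessThan_Suc cylinder_approximable_Un sets.Un)
  qed
  have "(\<lambda>N. prob (\<Union>n<N. A n)) \<longlonglongrightarrow> prob (\<Union>N. \<Union>n<N. A n)"
    using finite_UN by (intro finite_Lim_measure_incseq) (auto simp: incseq_def intro: less_le_trans)
  moreover have "(\<Union>N. \<Union>n<N. A n) = (\<Union>n. A n)" by blast
  ultimately have "\<forall>\<^sub>F N in sequentially. prob (\<Union>n. A n) - \<eta> / 2 < prob (\<Union>n<N. A n)"
    using \<open>\<eta> > 0\<close> by (intro order_tendstoD(1)) auto
  then obtain N where N: "prob (\<Union>n. A n) - \<eta> / 2 < prob (\<Union>n<N. A n)"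
    by (auto simp: eventually_sequentially)
  have "\<eta> / 2 > 0" using \<open>\<eta> > 0\<close> by simp
  then obtain k E where kE: "prob (sym_diff (\<Union>n<N. A n) (cylinder k E)) < \<eta> / 2"
    using finite_UN[of N] unfolding cylinder_approximable_def by blast
  have U: "(\<Union>n. A n) \<in> sets m" "(\<Union>n<N. A n) \<in> sets m" "(\<Union>n<N. A n) \<subseteq> (\<Union>n. A n)"
    using A finite_UN by auto
  have "sym_diff (\<Union>n. A n) (cylinder k E) \<subseteq> ((\<Union>n. A n) - (\<Union>n<N. A n)) \<union> sym_diff (\<Union>n<N. A n) (cylinder k E)"
    by blast
  then have "prob (sym_diff (\<Union>n. A n) (cylinder k E))
      \<le> prob ((\<Union>n. A n) - (\<Union>n<N. A n)) + prob (sym_diff (\<Union>n<N. A n) (cylinder k E))"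
    using U cylinder_sets by (intro prob_le_Un) auto
  also have "prob ((\<Union>n. A n) - (\<Union>n<N. A n)) = prob (\<Union>n. A n) - prob (\<Union>n<N. A n)"
    using U by (rule finite_measure_Diff)
  finally have "prob (sym_diff (\<Union>n. A n) (cylinder k E)) < \<eta>" using N kE by linarith
  then show "\<exists>k E. prob (sym_diff (\<Union>n. A n) (cylinder k E)) < \<eta>" by blast
qed

lemma sets_cylinder_approximable:
  assumes "A \<in> sets m"
  shows "cylinder_approximable A"
proof -
  have "A \<in> (\<inter>) (space m) ` sets (PiM UNIV (\<lambda>_. count_space UNIV))"
    using assms unfolding sets_eq sets_restrict_space .
  then obtain B where B: "B \<in> sets (PiM UNIV (\<lambda>_. count_space UNIV))" and "A = space m \<inter> B" ..
  then have A: "A = B \<inter> space m" by (simp only: Int_commute)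
  from B have "B \<inter> space m \<in> sets m \<and> cylinder_approximable (B \<inter> space m)"
    unfolding sets_PiM_single
  proof induction
    case (Basic a)
    then obtain i C where a: "a = {f \<in> \<Pi>\<^sub>E i\<in>UNIV. space (count_space UNIV). f i \<in> C}" by blast
    define k where "k = nat \<bar>i\<bar>"
    have "window (- int k) (2 * k + 1) x ! nat (i + int k) = x i" for x :: "int \<Rightarrow> int"
      by (subst nth_window) (auto simp: k_def)
    then have "a \<inter> space m = cylinder k {w. w ! nat (i + int k) \<in> C}"
      unfolding a cylinder_def by auto
    then show ?case by (simp add: cylinder_sets cylinder_approximable_cylinder)
  next
    case Empty
    then show ?case using cylinder_approximable_cylinder[of 0 "{}"] by (simp add: cylinder_def)
  next
    case (Compl a)
    have "((\<Pi>\<^sub>E i\<in>UNIV. space (count_space UNIV)) - a) \<inter> space m = space m - a \<inter> space m"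
      by (simp add: Diff_Int_distrib2)
    then show ?case using Compl.IH cylinder_approximable_Diff[of "a \<inter> space m"] by (simp add: sets.compl_sets)
  next
    case (Union a)
    have eq: "\<Union> (range a) \<inter> space m = (\<Union>n. a n \<inter> space m)" by auto
    have "range (\<lambda>n. a n \<inter> space m) \<subseteq> sets m" using Union.IH by auto
    then have "(\<Union>n. a n \<inter> space m) \<in> sets m" by (rule sets.countable_UN)
    moreover have "cylinder_approximable (\<Union>n. a n \<inter> space m)"
      using Union.IH by (intro cylinder_approximable_UN) auto
    ultimately show ?case unfolding eq by blast
  qed
  then show ?thesis unfolding A by simp
qed

lemma cylinder_approximation:
  assumes "A \<in> sets m" "\<eta> > 0"
  shows "\<exists>k. \<forall>K\<ge>k. \<exists>E. prob (sym_diff A (cylinder K E)) < \<eta>"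
proof -
  obtain k E where "prob (sym_diff A (cylinder k E)) < \<eta>"
    using sets_cylinder_approximable[OF assms(1)] assms(2) unfolding cylinder_approximable_def by blast
  then have "\<exists>E. prob (sym_diff A (cylinder K E)) < \<eta>" if "K \<ge> k" for K
    unfolding cylinder_lift[OF that, symmetric] by blast
  then show ?thesis by blast
qed

lemma common_cylinder_approximation:
  assumes Q: "finite Q" "Q \<subseteq> sets m" and "\<eta> > 0"
  obtains K E where "\<And>A. A \<in> Q \<Longrightarrow> prob (sym_diff A (cylinder K (E A))) < \<eta>"
proof -
  have "\<forall>A\<in>Q. \<exists>k. \<forall>K\<ge>k. \<exists>E. prob (sym_diff A (cylinder K E)) < \<eta>"
    using Q(2) \<open>\<eta> > 0\<close> by (intro ballI cylinder_approximation) auto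
  from bchoice[OF this] obtain k where k: "\<forall>A\<in>Q. \<forall>K\<ge>k A. \<exists>E. prob (sym_diff A (cylinder K E)) < \<eta>" ..
  define K where "K = Max (k ` Q)"
  have "\<forall>A\<in>Q. \<exists>E. prob (sym_diff A (cylinder K E)) < \<eta>"
  proof
    fix A assume A: "A \<in> Q"
    then have "k A \<le> K" unfolding K_def using Q(1) by (intro Max_ge) auto
    then show "\<exists>E. prob (sym_diff A (cylinder K E)) < \<eta>" using k A by blast
  qed
  from bchoice[OF this] obtain E where "\<forall>A\<in>Q. prob (sym_diff A (cylinder K (E A))) < \<eta>" ..
  then show ?thesis using that by blast
qed

text \<open>Guess any cell whose approximating cylinder contains the window.\<close>
lemma cell_window_approximation:
  assumes P: "meas_partition m P" and "\<eta> > 0"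
  shows "\<exists>K g. prob {x \<in> space m. cell P x \<noteq> g (window (- int K) (2 * K + 1) x)} < \<eta>"
proof -
  define Q where "Q = cell P ` space m"
  have Q: "finite Q" "Q \<subseteq> P" "Q \<noteq> {}"
    using simple_functionD(1)[OF simple_function_cell[OF P]] cell_in_partition(1)[OF P] not_empty
    by (auto simp: Q_def)
  then have sets: "Q \<subseteq> sets m" using P by (auto simp: meas_partition_def)
  have "card Q > 0" using Q by (simp add: card_gt_0_iff)
  then obtain K E where E: "\<And>A. A \<in> Q \<Longrightarrow> prob (sym_diff A (cylinder K (E A))) < \<eta> / card Q"
    using common_cylinder_approximation[OF Q(1) sets, of "\<eta> / card Q"] \<open>\<eta> > 0\<close> by auto
  define g where "g w = (SOME A. A \<in> Q \<and> w \<in> E A)" for w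
  let ?w = "window (- int K) (2 * K + 1)"
  have sub: "{x \<in> space m. cell P x \<noteq> g (?w x)} \<subseteq> (\<Union>A\<in>Q. sym_diff A (cylinder K (E A)))"
  proof
    fix x assume "x \<in> {x \<in> space m. cell P x \<noteq> g (?w x)}"
    then have x: "x \<in> space m" and wrong: "cell P x \<noteq> g (?w x)" by auto
    have A: "cell P x \<in> Q" "x \<in> cell P x" using cell_in_partition[OF P x] x by (auto simp: Q_def)
    show "x \<in> (\<Union>A\<in>Q. sym_diff A (cylinder K (E A)))"
    proof (cases "\<exists>A\<in>Q. ?w x \<in> E A")
      case True
      then have "\<exists>A. A \<in> Q \<and> ?w x \<in> E A" by blast
      then have B: "g (?w x) \<in> Q \<and> ?w x \<in> E (g (?w x))" unfolding g_def by (rule someI_ex)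
      then have "x \<notin> g (?w x)" using cell_eq_iff[OF P x, of "g (?w x)"] wrong Q(2) by auto
      moreover have "x \<in> cylinder K (E (g (?w x)))" using x B by (simp add: cylinder_def)
      ultimately show ?thesis using B by blast
    next
      case False
      then have "x \<notin> cylinder K (E (cell P x))" using A(1) by (simp add: cylinder_def)
      then show ?thesis using A by blast
    qed
  qed
  have sd: "sym_diff A (cylinder K (E A)) \<in> sets m" if "A \<in> Q" for A
    using sets that cylinder_sets[of K "E A"] by (intro sets.Un sets.Diff) auto
  then have "(\<Union>A\<in>Q. sym_diff A (cylinder K (E A))) \<in> sets m" using Q(1) by (intro sets.finite_UN) auto
  with sub have "prob {x \<in> space m. cell P x \<noteq> g (?w x)} \<le> prob (\<Union>A\<in>Q. sym_diff A (cylinder K (E A)))"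
    by (rule finite_measure_mono)
  also have "\<dots> \<le> (\<Sum>A\<in>Q. prob (sym_diff A (cylinder K (E A))))"
    using Q(1) sd by (intro finite_measure_subadditive_finite) auto
  also have "\<dots> < (\<Sum>A\<in>Q. \<eta> / card Q)" using Q E by (intro sum_strict_mono) auto
  also have "\<dots> = \<eta>" using \<open>card Q > 0\<close> by simp
  finally show ?thesis by blast
qed

definition parsed_before :: "nat \<Rightarrow> (int \<Rightarrow> int) set" where
  "parsed_before e =
     {x \<in> space m. \<exists>i<e. \<forall>L. window (int i) L x \<in> prefix_concatenations (dseq \<beta>) L}"

lemma parsed_before_sets: "parsed_before e \<in> sets m"
proof -
  have "parsed_before e
      = {x \<in> space m. \<exists>i\<in>{..<e}. \<forall>L. window (int i) L x \<in> prefix_concatenations (dseq \<beta>) L}"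
    by (auto simp: parsed_before_def)
  also have "\<dots> \<in> sets m"
    by (intro sets.sets_Collect_finite_Ex sets.sets_Collect_countable_All window_preimage_sets) auto
  finally show ?thesis .
qed

lemma prob_parsed_before_tendsto:
  assumes supp: "support m = D_set \<beta>"
  shows "(\<lambda>e. prob (parsed_before e)) \<longlonglongrightarrow> 1"
proof -
  let ?U = "\<Union>e. parsed_before e"
  have U: "?U \<in> sets m" using parsed_before_sets by (intro sets.countable_UN) auto
  have "x \<in> ?U" if x: "x \<in> space m" and "x \<in> support m" for x
  proof -
    have "x \<in> D_set \<beta>" using \<open>x \<in> support m\<close> unfolding supp .
    then obtain i where "\<forall>L. window (int i) L x \<in> prefix_concatenations (dseq \<beta>) L"
      by (rule D_set_parsed[THEN exE])
    then have "x \<in> parsed_before (Suc i)" using x by (auto simp: parsed_before_def)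
    then show ?thesis by blast
  qed
  then have "(space m - ?U) \<inter> support m = {}" by blast
  with sets.compl_sets[OF U] have "emeasure m (space m - ?U) = 0" by (rule emeasure_outside_support)
  then have "prob ?U = 1" using prob_compl[OF U] by (simp add: measure_def)
  moreover have "(\<lambda>e. prob (parsed_before e)) \<longlonglongrightarrow> prob ?U"
  proof (rule finite_Lim_measure_incseq)
    show "range parsed_before \<subseteq> sets m" using parsed_before_sets by auto
    show "incseq parsed_before" by (auto simp: incseq_def parsed_before_def intro: less_le_trans)
  qed
  ultimately show ?thesis by simp
qed

lemma window_in_tail_parsed_words:
  assumes x: "x \<in> parsed_before e"
  shows "window 0 L x \<in> tail_parsed_words (dseq \<beta>) (alphabet \<beta>) L e"
proof -
  obtain i where i: "i < e" "\<And>L. window (int i) L x \<in> prefix_concatenations (dseq \<beta>) L"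
    and "x \<in> space m" using x unfolding parsed_before_def by auto
  have "drop i (window 0 L x) \<in> prefix_concatenations (dseq \<beta>) (L - i)"
  proof (cases "i \<le> L")
    case True
    then have "drop i (window 0 L x) = window (int i) (L - i) x"
      using window_add[of 0 i "L - i" x] by simp
    then show ?thesis using i(2) by simp
  qed (simp add: prefix_concatenations.simps)
  then show ?thesis
    using i(1) set_window_subset[OF \<open>x \<in> space m\<close>] by (auto simp: tail_parsed_words_def)
qed

lemma entropy_window_le:
  assumes e: "e \<ge> 1"
  defines "\<delta> \<equiv> prob (space m - parsed_before e)"
  shows "\<H>(window 0 L) \<le> ln (real e * real (card (alphabet \<beta>)) ^ e * golden_ratio ^ L) + 3
           + L * \<delta> * ln (card (alphabet \<beta>))"
proof -
  let ?A = "card (alphabet \<beta>)" and ?V = "window 0 L"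
  define G where "G = tail_parsed_words (dseq \<beta>) (alphabet \<beta>) L e"
  define s where "s = prob {x \<in> space m. ?V x \<notin> G}"
  define C where "C = real e * real ?A ^ e * golden_ratio ^ L"
  have A: "1 \<le> ?A" using finite_alphabet alphabet_nonempty by (simp add: Suc_le_eq card_gt_0_iff)
  then have "1 \<le> e * ?A ^ e" using e by (simp add: Suc_le_eq)
  then have "1 \<le> real (e * ?A ^ e)" by (metis of_nat_1 of_nat_le_iff)
  then have C: "1 \<le> C"
    using mult_mono[OF _ one_le_power[OF golden_ratio_ge_1, of L]] by (simp add: C_def)
  have "{x \<in> space m. ?V x \<notin> G} \<subseteq> space m - parsed_before e"
    using window_in_tail_parsed_words unfolding G_def by blast
  then have s: "0 \<le> s" "s \<le> 1" "s \<le> \<delta>"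
    unfolding s_def \<delta>_def by (auto intro!: finite_measure_mono sets.Diff parsed_before_sets)
  have "card (?V ` space m \<inter> G) \<le> card G"
    unfolding G_def tail_parsed_words_def
    by (intro card_mono finite_subset[OF _ finite_lists_length_eq[OF finite_alphabet[of \<beta>], where n=L]]) auto
  then have "card (?V ` space m \<inter> G) \<le> C"
    unfolding C_def G_def
    by (rule order_trans[OF of_nat_mono card_tail_parsed_words_le[OF finite_alphabet alphabet_nonempty]])
  then have good: "(1 - s) * ln (card (?V ` space m \<inter> G)) \<le> ln C"
    using s C by (cases "card (?V ` space m \<inter> G) = 0") (auto intro: order_trans[OF mult_left_le_one_le])
  have "?V ` space m - G \<subseteq> {w. set w \<subseteq> alphabet \<beta> \<and> length w = L}"
    using set_window_subset by auto
  then have "card (?V ` space m - G) \<le> card {w. set w \<subseteq> alphabet \<beta> \<and> length w = L}"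
    by (rule card_mono[OF finite_lists_length_eq[OF finite_alphabet[of \<beta>]]])
  also have "\<dots> = ?A ^ L" by (rule card_lists_length_eq[OF finite_alphabet])
  finally have "ln (card (?V ` space m - G)) \<le> L * ln ?A"
    using A by (cases "card (?V ` space m - G) = 0") (auto simp: ln_realpow[symmetric] of_nat_power[symmetric] simp del: of_nat_power)
  moreover have "0 \<le> ln (card (?V ` space m - G))" by (cases "card (?V ` space m - G) = 0") auto
  ultimately have "s * ln (card (?V ` space m - G)) \<le> \<delta> * (L * ln ?A)"
    using s by (intro mult_mono) (auto simp: \<delta>_def)
  then have bad: "s * ln (card (?V ` space m - G)) \<le> L * \<delta> * ln ?A" by (simp add: algebra_simps)
  have "- (s * ln s) - (1 - s) * ln (1 - s) \<le> 3"
    using binary_entropy_le_sqrt[OF s(1,2)] real_sqrt_le_1_iff[of s] s by linarith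
  then show ?thesis
    using entropy_le_split[OF simple_function_window, of 0 L G] good bad unfolding s_def C_def by simp
qed

lemma entropy_window_shift: "\<H>(window (- int K) L) = \<H>(window 0 L)"
proof -
  have "\<H>(window 0 L) = \<H>(\<lambda>x. window (- int K) L ((shift ^^ K) x))"
    by (simp add: window_funpow_shift)
  also have "\<dots> = \<H>(window (- int K) L)"
    by (rule entropy_comp_measure_preserving[OF measure_preserving_funpow[OF measure_preserving_shift]
          simple_function_window])
  finally show ?thesis ..
qed

lemma entropy_error_le_sqrt:
  assumes X: "simple_function m X" and Y: "simple_function m Y"
  defines "s \<equiv> prob {x \<in> space m. X x \<noteq> Y x}"
  shows "\<H>(\<lambda>x. if X x = Y x then None else Some (X x)) \<le> (ln (card (X ` space m)) + 3) * sqrt s"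
proof -
  have s: "0 \<le> s" "s \<le> 1" by (simp_all add: s_def)
  have "1 \<le> card (X ` space m)"
    using simple_functionD(1)[OF X] not_empty by (simp add: Suc_le_eq card_gt_0_iff)
  then have "s * ln (card (X ` space m)) \<le> sqrt s * ln (card (X ` space m))"
    using le_sqrt_self[OF s] by (intro mult_right_mono) auto
  then show ?thesis
    using entropy_error_le[OF X Y] binary_entropy_le_sqrt[OF s] unfolding s_def[symmetric]
    by (simp add: algebra_simps)
qed

lemma entropy_itinerary_le:
  fixes K n :: nat and g :: "int list \<Rightarrow> (int \<Rightarrow> int) set"
  assumes P: "meas_partition m P" and e: "e \<ge> 1"
  defines "A \<equiv> card (alphabet \<beta>)" and "N \<equiv> card (cell P ` space m)"
    and "\<delta> \<equiv> prob (space m - parsed_before e)"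
    and "s \<equiv> prob {x \<in> space m. cell P x \<noteq> g (window (- int K) (2 * K + 1) x)}"
  shows "\<H>(itinerary shift (cell P) n)
           \<le> ln (real e * real A ^ e * golden_ratio ^ (2 * K)) + 3 + 2 * K * ln A
             + n * (ln golden_ratio + \<delta> * ln A + (ln N + 3) * sqrt s)"
proof -
  let ?Y = "\<lambda>x. g (window (- int K) (2 * K + 1) x)" and ?W = "window (- int K) (n + 2 * K)"
  note X = simple_function_cell[OF P]
  have Y: "simple_function m ?Y"
    using simple_function_compose[OF simple_function_window, of g] by (simp add: comp_def)
  have "\<exists>h. \<forall>x\<in>space m. ?Y ((shift ^^ i) x) = h (?W x)" if "i < n" for i
  proof (intro exI ballI)
    fix x show "?Y ((shift ^^ i) x) = g (take (2 * K + 1) (drop i (?W x)))"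
      using that by (simp add: window_funpow_shift take_drop_window)
  qed
  from entropy_itinerary_le_guess[OF measure_preserving_shift X Y simple_function_window this]
  have itinerary: "\<H>(itinerary shift (cell P) n)
      \<le> \<H>(?W) + n * \<H>(\<lambda>x. if cell P x = ?Y x then None else Some (cell P x))" .
  have "\<H>(\<lambda>x. if cell P x = ?Y x then None else Some (cell P x)) \<le> (ln N + 3) * sqrt s"
    unfolding N_def s_def by (rule entropy_error_le_sqrt[OF X Y])
  then have error: "n * \<H>(\<lambda>x. if cell P x = ?Y x then None else Some (cell P x)) \<le> n * ((ln N + 3) * sqrt s)"
    by (rule mult_left_mono) simp
  have window: "\<H>(?W) \<le> ln (real e * real A ^ e * golden_ratio ^ (n + 2 * K)) + 3 + (n + 2 * K) * \<delta> * ln A"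
    unfolding entropy_window_shift A_def \<delta>_def by (rule entropy_window_le[OF e])
  have "ln (real e * real A ^ e * golden_ratio ^ (n + 2 * K))
      = ln (real e * real A ^ e * golden_ratio ^ (2 * K)) + n * ln golden_ratio"
    using e golden_ratio_ge_1 finite_alphabet alphabet_nonempty
    by (simp add: A_def ln_mult ln_realpow power_add card_gt_0_iff)
  moreover have "(n + 2 * K) * \<delta> * ln A \<le> n * (\<delta> * ln A) + 2 * K * ln A"
  proof -
    have "0 \<le> \<delta>" "\<delta> \<le> 1" "0 \<le> ln A"
      using finite_alphabet alphabet_nonempty by (auto simp: \<delta>_def A_def Suc_le_eq card_gt_0_iff)
    then have "\<delta> * (2 * K * ln A) \<le> 2 * K * ln A" by (intro mult_left_le_one_le) auto
    then show ?thesis by (simp add: algebra_simps)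
  qed
  ultimately show ?thesis using itinerary error window unfolding distrib_left by linarith
qed

lemma parsed_before_eventually_small:
  assumes supp: "support m = D_set \<beta>" and "\<epsilon> > 0"
  shows "\<exists>e\<ge>1. prob (space m - parsed_before e) * ln (card (alphabet \<beta>)) \<le> \<epsilon>"
proof -
  let ?A = "card (alphabet \<beta>)"
  have lnA: "0 \<le> ln ?A" using finite_alphabet alphabet_nonempty by (simp add: Suc_le_eq card_gt_0_iff)
  have "\<forall>\<^sub>F e in sequentially. 1 - \<epsilon> / (1 + ln ?A) < prob (parsed_before e)"
    using prob_parsed_before_tendsto[OF supp] \<open>\<epsilon> > 0\<close> lnA by (intro order_tendstoD(1)) auto
  then obtain e0 where "\<And>e. e \<ge> e0 \<Longrightarrow> 1 - \<epsilon> / (1 + ln ?A) < prob (parsed_before e)"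
    by (auto simp: eventually_sequentially)
  then have "1 - \<epsilon> / (1 + ln ?A) < prob (parsed_before (Suc e0))" by simp
  then have "prob (space m - parsed_before (Suc e0)) < \<epsilon> / (1 + ln ?A)"
    using prob_compl[OF parsed_before_sets, of "Suc e0"] by linarith
  then have "prob (space m - parsed_before (Suc e0)) * (1 + ln ?A) \<le> \<epsilon>"
    using lnA by (simp add: field_simps)
  moreover have "prob (space m - parsed_before (Suc e0)) * ln ?A
      \<le> prob (space m - parsed_before (Suc e0)) * (1 + ln ?A)"
    by (simp add: algebra_simps)
  ultimately show ?thesis by (intro exI[of _ "Suc e0"]) auto
qed

lemma cell_window_error_small:
  assumes P: "meas_partition m P" and "\<epsilon> > 0"
  shows "\<exists>K g. (ln (card (cell P ` space m)) + 3)
            * sqrt (prob {x \<in> space m. cell P x \<noteq> g (window (- int K) (2 * K + 1) x)}) \<le> \<epsilon>"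
proof -
  let ?N = "card (cell P ` space m)"
  have lnN: "0 \<le> ln ?N"
    using simple_functionD(1)[OF simple_function_cell[OF P]] not_empty by (simp add: Suc_le_eq card_gt_0_iff)
  have "(\<epsilon> / (ln ?N + 3))\<^sup>2 > 0" using \<open>\<epsilon> > 0\<close> lnN by simp
  then obtain K g where
    "prob {x \<in> space m. cell P x \<noteq> g (window (- int K) (2 * K + 1) x)} < (\<epsilon> / (ln ?N + 3))\<^sup>2"
    using cell_window_approximation[OF P] by blast
  from real_sqrt_less_mono[OF this]
  have "sqrt (prob {x \<in> space m. cell P x \<noteq> g (window (- int K) (2 * K + 1) x)}) < \<epsilon> / (ln ?N + 3)"
    using \<open>\<epsilon> > 0\<close> lnN by simp
  then show ?thesis using lnN by (intro exI[of _ K] exI[of _ g]) (simp add: field_simps)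
qed

lemma entropy_wrt_le_ln_golden_ratio:
  assumes supp: "support m = D_set \<beta>" and P: "meas_partition m P"
  shows "entropy_wrt m shift P \<le> ln golden_ratio"
proof -
  let ?a = "\<lambda>n. \<H>(itinerary shift (cell P) n)"
  note X = simple_function_cell[OF P]
  have "entropy_wrt m shift P = lim (\<lambda>n. ?a (Suc n) / Suc n)"
    by (simp add: entropy_wrt_def part_entropy_join_part[OF P shift_measurable])
  also have "\<dots> \<le> ln golden_ratio"
  proof (rule subadditive_lim_le)
    show "?a (n + k) \<le> ?a n + ?a k" for n k
      by (rule entropy_itinerary_subadditive[OF measure_preserving_shift X])
    show "0 \<le> ?a n" for n
      by (rule entropy_nonneg[OF simple_function_itinerary[OF shift_measurable X]])
    fix \<epsilon> :: real assume "\<epsilon> > 0"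
    then obtain e where e: "e \<ge> 1" and \<delta>: "prob (space m - parsed_before e) * ln (card (alphabet \<beta>)) \<le> \<epsilon> / 2"
      using parsed_before_eventually_small[OF supp, of "\<epsilon> / 2"] by auto
    obtain K g where s: "(ln (card (cell P ` space m)) + 3)
        * sqrt (prob {x \<in> space m. cell P x \<noteq> g (window (- int K) (2 * K + 1) x)}) \<le> \<epsilon> / 2"
      using cell_window_error_small[OF P, of "\<epsilon> / 2"] \<open>\<epsilon> > 0\<close> by auto
    show "\<exists>C. \<forall>n\<ge>1. ?a n \<le> C + n * (ln golden_ratio + \<epsilon>)"
    proof (intro exI allI impI)
      fix n :: nat
      show "?a n \<le> ln (real e * real (card (alphabet \<beta>)) ^ e * golden_ratio ^ (2 * K)) + 3
          + 2 * K * ln (card (alphabet \<beta>)) + n * (ln golden_ratio + \<epsilon>)"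
        using entropy_itinerary_le[OF P e, where K=K and n=n and g=g] mult_left_mono[OF add_left_mono[OF add_mono[OF \<delta> s]], of n]
        by (simp add: algebra_simps)
    qed
  qed
  finally show ?thesis .
qed

end

theorem proposition1:
  fixes \<beta> :: real and m :: "(int \<Rightarrow> int) measure"
  assumes "\<beta> < -1"
    and "shift_inv_prob \<beta> m"
    and "ergodic m shift"
    and "\<forall>\<mu>. shift_inv_prob \<beta> \<mu> \<longrightarrow> ks_entropy \<mu> shift \<le> ks_entropy m shift"
    and "support m = D_set \<beta>"
  shows "ks_entropy m shift \<le> ereal (ln ((1 + sqrt 5) / 2))"
proof -
  interpret shift_invariant_measure \<beta> m by (rule shift_invariant_measure.intro) (rule assms(2))
  have "entropy_wrt m shift P \<le> ln ((1 + sqrt 5) / 2)" if "meas_partition m P" for P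
    using entropy_wrt_le_ln_golden_ratio[OF assms(5) that] by (simp add: golden_ratio_def)
  then show ?thesis unfolding ks_entropy_def by (intro SUP_least) auto
qed

end
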